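(* Let $m,n$ be positive integers and let $m=p_1^{k_1}\cdots p_r^{k_r}$ be the prime factorization of $m$. If $p_1,\dots,p_r$ are odd and none of them is a Wieferich prime, then $$P(m,n)=\mathrm{lcm}\left(p_1^{k_1-1}P(p_1,n),\dots,p_r^{k_r-1}P(p_r,n)\right).$$
   Context: For positive integers $m,n$, let $\mathbf{Z}_m$ be the integers modulo $m$ and $T:\mathbf{Z}_m^n\to\mathbf{Z}_m^n$, $T(a_0,\dots,a_{n-1})=(a_0+a_1,a_1+a_2,\dots,a_{n-2}+a_{n-1},a_{n-1}+a_0)$. For $\mathbf{a}\in\mathbf{Z}_m^n$ the sequence $(T^k\mathbf{a})_{k\ge0}$ is eventually periodic; its cycle length is the smallest positive integer $P$ such that there is $N$ with $T^{k+P}\mathbf{a}=T^k\mathbf{a}$ for all $k\ge N$. $P(m,n)$ denotes the maximum of the cycle lengths of $(T^k\mathbf{a})_{k\ge0}$ over all $\mathbf{a}\in\mathbf{Z}_m^n$. A prime $p$ is a Wieferich prime if $2^{p-1}\equiv1\pmod{p^2}$. *)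

theory Defs
  imports "HOL-Number_Theory.Number_Theory"
begin

(* Elements of Z_m^n are represented as functions a :: nat => nat with
   a i < m for i < n (residues 0..m-1) and a i = 0 for i >= n. *)
definition vecs :: "nat \<Rightarrow> nat \<Rightarrow> (nat \<Rightarrow> nat) set" where
  "vecs m n = {a. (\<forall>i<n. a i < m) \<and> (\<forall>i\<ge>n. a i = 0)}"

definition Tmap :: "nat \<Rightarrow> nat \<Rightarrow> (nat \<Rightarrow> nat) \<Rightarrow> (nat \<Rightarrow> nat)" where
  "Tmap m n a = (\<lambda>i. if i < n then (a i + a ((i + 1) mod n)) mod m else 0)"

definition cycle_len :: "nat \<Rightarrow> nat \<Rightarrow> (nat \<Rightarrow> nat) \<Rightarrow> nat" where
  "cycle_len m n a = (LEAST P. 0 < P \<and>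
      (\<exists>N. \<forall>k\<ge>N. (Tmap m n ^^ (k + P)) a = (Tmap m n ^^ k) a))"

definition Pmax :: "nat \<Rightarrow> nat \<Rightarrow> nat" where
  "Pmax m n = Max (cycle_len m n ` vecs m n)"

definition wieferich :: "nat \<Rightarrow> bool" where
  "wieferich p \<longleftrightarrow> prime p \<and> [2 ^ (p - 1) = 1] (mod p^2)"

end

theory Submission
  imports Defs "HOL-Computational_Algebra.Polynomial"
begin

text \<open>Encode \<open>a \<in> \<int>\<^sub>m\<^sup>n\<close> as a polynomial in \<open>\<int>[x]/(m, x^n - 1)\<close>, so that \<open>T\<close> becomes
  multiplication by \<open>1 + x\<close>. Then \<open>T^(N + P) = T^N\<close> on all of \<open>\<int>\<^sub>m\<^sup>n\<close> iff
  \<open>(1 + x)^N ((1 + x)^P - 1) \<in> (m, x^n - 1)\<close>, which is already the condition for the unit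
  vector \<open>(1, 0, ..., 0)\<close>; so its cycle length is \<open>P(m, n)\<close>, and the periods are exactly the
  multiples of \<open>P(m, n)\<close>. The Chinese remainder theorem then makes \<open>P(m, n)\<close> the lcm of the
  \<open>P(p^k, n)\<close> over the prime powers \<open>p^k\<close> exactly dividing \<open>m\<close>.

  For a prime power, the binomial theorem lifts a period \<open>Q\<close> modulo \<open>p\<close> to the period
  \<open>p^(k - 1) Q\<close> modulo \<open>p^k\<close>; conversely, for odd \<open>p\<close>, a period \<open>p^i Q\<close> modulo \<open>p^(i + 2)\<close>
  descends to the period \<open>Q\<close> modulo \<open>p^2\<close>. Hence \<open>P(p^k, n) = p^(k - 1) P(p, n)\<close> unless
  \<open>P(p, n)\<close> is a period modulo \<open>p^2\<close>. Write \<open>n = p^e n'\<close> with \<open>p\<close> not dividing \<open>n'\<close>. Then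
  \<open>P(p, n)\<close> divides \<open>p^e (p^f - 1)\<close> for \<open>f = \<phi>(n')\<close>, whereas every period modulo \<open>p^2\<close> is
  divisible by \<open>p^(e + 1)\<close>. The latter goes by induction on \<open>e\<close>, substituting \<open>x \<mapsto> x^p\<close>, down
  to \<open>e = 0\<close>, where evaluation at \<open>x = 1\<close> turns a period \<open>Q\<close> into \<open>2^Q \<equiv> 1 (mod p^2)\<close>; this
  forces \<open>p dvd Q\<close> precisely because \<open>p\<close> is not a Wieferich prime.\<close>

section \<open>The ideal \<open>(M, x^d - 1)\<close> of \<open>\<int>[x]\<close>\<close>

definition x_pow_minus_one :: "nat \<Rightarrow> int poly" where
  "x_pow_minus_one d = monom 1 d - 1"

definition cyc_ideal :: "int \<Rightarrow> nat \<Rightarrow> int poly set" where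
  "cyc_ideal M d = {smult M a + x_pow_minus_one d * b | a b. True}"

lemma mem_cyc_ideal_iff: "f \<in> cyc_ideal M d \<longleftrightarrow> (\<exists>a b. f = smult M a + x_pow_minus_one d * b)"
  by (simp add: cyc_ideal_def)

lemma smult_in_cyc_ideal: "smult M f \<in> cyc_ideal M d"
  unfolding mem_cyc_ideal_iff by (rule exI[of _ f], rule exI[of _ 0]) simp

lemma x_pow_minus_one_mult_in_cyc_ideal: "x_pow_minus_one d * f \<in> cyc_ideal M d"
  unfolding mem_cyc_ideal_iff by (rule exI[of _ 0]) simp

lemma zero_in_cyc_ideal [simp]: "0 \<in> cyc_ideal M d"
  using smult_in_cyc_ideal[of M 0] by simp

lemma cyc_ideal_one [simp]: "f \<in> cyc_ideal 1 d"
  using smult_in_cyc_ideal[of 1 f] by simp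

lemma cyc_ideal_add:
  assumes "f \<in> cyc_ideal M d" and "g \<in> cyc_ideal M d"
  shows "f + g \<in> cyc_ideal M d"
proof -
  obtain a b a' b' where f: "f = smult M a + x_pow_minus_one d * b"
    and g: "g = smult M a' + x_pow_minus_one d * b'"
    using assms unfolding mem_cyc_ideal_iff by blast
  have "f + g = smult M (a + a') + x_pow_minus_one d * (b + b')"
    unfolding f g by (simp add: algebra_simps smult_add_right)
  then show ?thesis unfolding mem_cyc_ideal_iff by blast
qed

lemma cyc_ideal_mult_left:
  assumes "f \<in> cyc_ideal M d"
  shows "g * f \<in> cyc_ideal M d"
proof -
  obtain a b where f: "f = smult M a + x_pow_minus_one d * b"
    using assms unfolding mem_cyc_ideal_iff by blast
  have "g * f = smult M (g * a) + x_pow_minus_one d * (g * b)"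
    unfolding f by (simp add: algebra_simps)
  then show ?thesis unfolding mem_cyc_ideal_iff by blast
qed

lemma cyc_ideal_mult_right: "f \<in> cyc_ideal M d \<Longrightarrow> f * g \<in> cyc_ideal M d"
  using cyc_ideal_mult_left[of f M d g] by (simp add: mult.commute)

lemma cyc_ideal_smult: "f \<in> cyc_ideal M d \<Longrightarrow> smult c f \<in> cyc_ideal M d"
  using cyc_ideal_mult_left[of f M d "[:c:]"] by simp

lemma cyc_ideal_uminus: "f \<in> cyc_ideal M d \<Longrightarrow> - f \<in> cyc_ideal M d"
  using cyc_ideal_smult[of f M d "-1"] by simp

lemma cyc_ideal_diff: "f \<in> cyc_ideal M d \<Longrightarrow> g \<in> cyc_ideal M d \<Longrightarrow> f - g \<in> cyc_ideal M d"
  using cyc_ideal_add[of f M d "- g"] cyc_ideal_uminus[of g M d] by simp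

lemma cyc_ideal_sum:
  "(\<And>i. i \<in> S \<Longrightarrow> F i \<in> cyc_ideal M d) \<Longrightarrow> (\<Sum>i\<in>S. F i) \<in> cyc_ideal M d"
  by (induction S rule: infinite_finite_induct) (auto intro: cyc_ideal_add)

lemma cyc_ideal_power_diff:
  assumes "f - g \<in> cyc_ideal M d"
  shows "f ^ k - g ^ k \<in> cyc_ideal M d"
proof (induction k)
  case (Suc k)
  have "f ^ Suc k - g ^ Suc k = f * (f ^ k - g ^ k) + g ^ k * (f - g)"
    by (simp add: algebra_simps)
  then show ?case using Suc assms by (metis cyc_ideal_add cyc_ideal_mult_left)
qed simp

lemma cyc_ideal_mult:
  assumes "f \<in> cyc_ideal A d" and "g \<in> cyc_ideal B d"
  shows "f * g \<in> cyc_ideal (A * B) d"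
proof -
  obtain a b a' b' where f: "f = smult A a + x_pow_minus_one d * b"
    and g: "g = smult B a' + x_pow_minus_one d * b'"
    using assms unfolding mem_cyc_ideal_iff by blast
  have "f * g = smult (A * B) (a * a') + x_pow_minus_one d * (smult A a * b' + b * g)"
    unfolding g by (simp add: f algebra_simps)
  then show ?thesis unfolding mem_cyc_ideal_iff by blast
qed

lemma cyc_ideal_power: "f \<in> cyc_ideal A d \<Longrightarrow> f ^ k \<in> cyc_ideal (A ^ k) d"
  by (induction k) (auto intro: cyc_ideal_mult)

lemma cyc_ideal_smult_mult: "f \<in> cyc_ideal A d \<Longrightarrow> smult B f \<in> cyc_ideal (B * A) d"
  using cyc_ideal_mult[OF smult_in_cyc_ideal[of B 1 d]] by simp

lemma cyc_ideal_of_nat_mult: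
  assumes "int q dvd int k" and "f \<in> cyc_ideal A d"
  shows "of_nat k * f \<in> cyc_ideal (int q * A) d"
proof -
  obtain r where "int k = int q * r" using assms(1) by (elim dvdE)
  then have "of_nat k * f = smult (int q) (smult r f)" by (simp add: of_nat_poly)
  then show ?thesis using cyc_ideal_smult_mult[OF cyc_ideal_smult[OF assms(2)]] by simp
qed

lemma cyc_ideal_dvd_modulus:
  assumes "B dvd A"
  shows "cyc_ideal A d \<subseteq> cyc_ideal B d"
proof
  fix f assume "f \<in> cyc_ideal A d"
  then obtain a b where "f = smult A a + x_pow_minus_one d * b" unfolding mem_cyc_ideal_iff by blast
  moreover obtain r where "A = B * r" using assms by (elim dvdE)
  ultimately have "f = smult B (smult r a) + x_pow_minus_one d * b" by simp
  then show "f \<in> cyc_ideal B d" unfolding mem_cyc_ideal_iff by blast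
qed

lemma cyc_ideal_power_modulus_mono: "k \<le> l \<Longrightarrow> cyc_ideal (A ^ l) d \<subseteq> cyc_ideal (A ^ k) d"
  by (rule cyc_ideal_dvd_modulus[OF le_imp_power_dvd])

lemma power_minus_one_dvd: "(x::'a::comm_ring_1) - 1 dvd x ^ k - 1"
  by (simp add: power_diff_1_eq)

lemma x_pow_minus_one_dvd:
  assumes "d' dvd d"
  shows "x_pow_minus_one d' dvd x_pow_minus_one d"
proof -
  obtain k where "d = d' * k" using assms by (elim dvdE)
  then have "monom (1::int) d = monom 1 d' ^ k" by (simp add: monom_power)
  then show ?thesis unfolding x_pow_minus_one_def by (simp add: power_minus_one_dvd)
qed

lemma cyc_ideal_dvd_degree:
  assumes "d' dvd d"
  shows "cyc_ideal M d \<subseteq> cyc_ideal M d'"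
proof
  fix f assume "f \<in> cyc_ideal M d"
  then obtain a b where "f = smult M a + x_pow_minus_one d * b" unfolding mem_cyc_ideal_iff by blast
  moreover obtain r where "x_pow_minus_one d = x_pow_minus_one d' * r"
    using x_pow_minus_one_dvd[OF assms] unfolding dvd_def by blast
  ultimately have "f = smult M a + x_pow_minus_one d' * (r * b)" by (simp add: mult.assoc)
  then show "f \<in> cyc_ideal M d'" unfolding mem_cyc_ideal_iff by blast
qed

lemma coeff_x_pow_minus_one_mult:
  "coeff (x_pow_minus_one d * b) (i + d) = coeff b i - coeff b (i + d)"
  by (simp add: x_pow_minus_one_def left_diff_distrib coeff_monom_mult)

text \<open>The coefficients of \<open>(x^d - 1) b\<close> from degree \<open>d\<close> on are the differences
  \<open>coeff b i - coeff b (i + d)\<close>, which telescope because \<open>b\<close> has finite support.\<close>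
lemma const_dvd_of_dvd_upper_coeffs:
  assumes "0 < d" and upper: "\<And>i. M dvd coeff (x_pow_minus_one d * b) (i + d)"
  shows "[:M:] dvd b"
proof -
  have telescope: "M dvd coeff b i - coeff b (i + d * k)" for i k
  proof (induction k arbitrary: i)
    case (Suc k)
    have "M dvd (coeff b i - coeff b (i + d)) + (coeff b (i + d) - coeff b (i + d + d * k))"
      using upper[of i] Suc[of "i + d"] by (intro dvd_add) (simp_all add: coeff_x_pow_minus_one_mult)
    then show ?case by (simp add: algebra_simps)
  qed simp
  have "coeff b (i + d * Suc (degree b)) = 0" for i
  proof (rule coeff_eq_0)
    have "Suc (degree b) \<le> d * Suc (degree b)"
      using assms(1) by (metis Suc_leI mult_1 mult_le_mono1 One_nat_def)
    then show "degree b < i + d * Suc (degree b)" by linarith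
  qed
  then show ?thesis using telescope unfolding const_poly_dvd_iff by (metis diff_zero)
qed

lemma cyc_ideal_low_degree_coeff_dvd:
  assumes "f \<in> cyc_ideal M d" and "0 < d" and "degree f < d"
  shows "M dvd coeff f i"
proof -
  obtain a b where f: "f = smult M a + x_pow_minus_one d * b"
    using assms(1) unfolding mem_cyc_ideal_iff by blast
  have "M dvd coeff (x_pow_minus_one d * b) (j + d)" for j
  proof -
    have "coeff f (j + d) = 0" using assms(3) by (simp add: coeff_eq_0)
    then have "coeff (x_pow_minus_one d * b) (j + d) = - (M * coeff a (j + d))" unfolding f by simp
    then show ?thesis by simp
  qed
  then have "[:M:] dvd b" by (rule const_dvd_of_dvd_upper_coeffs[OF assms(2)])
  then obtain b' where "b = smult M b'" by (auto elim: dvdE)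
  then have "f = smult M (a + x_pow_minus_one d * b')" unfolding f by (simp add: smult_add_right)
  then show ?thesis by simp
qed

lemma cyc_ideal_smult_cancel:
  assumes "smult c f \<in> cyc_ideal (c * A) d" and "0 < d" and "c \<noteq> 0"
  shows "f \<in> cyc_ideal A d"
proof -
  obtain a b where f: "smult c f = smult (c * A) a + x_pow_minus_one d * b"
    using assms(1) unfolding mem_cyc_ideal_iff by blast
  have "x_pow_minus_one d * b = smult c (f - smult A a)"
    by (simp add: f smult_diff_right)
  then have "[:c:] dvd b"
    by (intro const_dvd_of_dvd_upper_coeffs[OF assms(2)]) simp
  then obtain b' where "b = smult c b'" by (auto elim: dvdE)
  then have "smult c f = smult c (smult A a + x_pow_minus_one d * b')"
    unfolding f by (simp add: smult_add_right)
  then have "f = smult A a + x_pow_minus_one d * b'" using assms(3) by (metis smult_cancel)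
  then show ?thesis unfolding mem_cyc_ideal_iff by blast
qed

lemma cyc_ideal_one_poly_dvd: "f \<in> cyc_ideal M 1 \<Longrightarrow> M dvd poly f 1"
  unfolding mem_cyc_ideal_iff x_pow_minus_one_def by (auto simp: poly_monom)

lemma smult_sum_right: "smult c (\<Sum>i\<in>S. f i) = (\<Sum>i\<in>S. smult c (f i))"
  by (induction S rule: infinite_finite_induct) (simp_all add: smult_add_right)

lemma pcompose_power: "(f ^ k) \<circ>\<^sub>p g = (f \<circ>\<^sub>p g) ^ k"
  by (induction k) (simp_all add: pcompose_mult pcompose_1)

lemma coeff_pcompose_monom:
  fixes f :: "'a::comm_ring_1 poly"
  assumes "0 < p"
  shows "coeff (f \<circ>\<^sub>p monom 1 p) i = (if p dvd i then coeff f (i div p) else 0)"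
  using assms
proof (induction f arbitrary: i)
  case (pCons a f)
  have "coeff (pCons a f \<circ>\<^sub>p monom 1 p) i
      = (if i = 0 then a else 0) + (if i < p then 0 else coeff (f \<circ>\<^sub>p monom 1 p) (i - p))"
    by (simp add: pcompose_pCons coeff_monom_mult coeff_pCons split: nat.split)
  also have "\<dots> = (if p dvd i then coeff (pCons a f) (i div p) else 0)"
  proof (cases "i < p")
    case True
    then show ?thesis using pCons.prems by (cases "i = 0") (auto dest: dvd_imp_le)
  next
    case False
    then have "p dvd i \<longleftrightarrow> p dvd (i - p)" and "i div p = Suc ((i - p) div p)"
      using pCons.prems by (auto simp: dvd_minus_self le_div_geq)
    then show ?thesis using False pCons.IH[OF pCons.prems, of "i - p"] by auto
  qed
  finally show ?case .
qed simp

definition decimate :: "nat \<Rightarrow> 'a::zero poly \<Rightarrow> 'a poly" where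
  "decimate p g = Abs_poly (\<lambda>i. coeff g (p * i))"

lemma coeff_decimate:
  assumes "0 < p"
  shows "coeff (decimate p g) i = coeff g (p * i)"
proof -
  have "coeff (Abs_poly (\<lambda>i. coeff g (p * i))) = (\<lambda>i. coeff g (p * i))"
  proof (rule coeff_Abs_poly[of "degree g"])
    fix i assume "degree g < i"
    moreover have "i \<le> p * i" using assms by simp
    ultimately show "coeff g (p * i) = 0" by (intro coeff_eq_0) linarith
  qed
  then show ?thesis unfolding decimate_def by simp
qed

lemma decimate_pcompose_monom:
  "0 < p \<Longrightarrow> decimate p ((f :: 'a::comm_ring_1 poly) \<circ>\<^sub>p monom 1 p) = f"
  by (rule poly_eqI) (simp add: coeff_decimate coeff_pcompose_monom)

lemma decimate_add: "0 < p \<Longrightarrow> decimate p (f + g) = decimate p f + decimate p g"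
  by (rule poly_eqI) (simp add: coeff_decimate)

lemma decimate_smult: "0 < p \<Longrightarrow> decimate p (smult c f) = smult c (decimate p f)"
  by (rule poly_eqI) (simp add: coeff_decimate)

lemma decimate_x_pow_minus_one_mult:
  assumes "0 < p"
  shows "decimate p (x_pow_minus_one (p * d) * b) = x_pow_minus_one d * decimate p b"
proof (rule poly_eqI)
  fix i
  have "coeff (decimate p (x_pow_minus_one (p * d) * b)) i
      = coeff (monom 1 (p * d) * b) (p * i) - coeff b (p * i)"
    using assms by (simp add: coeff_decimate x_pow_minus_one_def algebra_simps)
  also have "\<dots> = (if i < d then 0 else coeff b (p * (i - d))) - coeff b (p * i)"
    using assms by (simp add: coeff_monom_mult diff_mult_distrib2)
  also have "\<dots> = coeff (x_pow_minus_one d * decimate p b) i"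
    using assms by (simp add: coeff_decimate x_pow_minus_one_def left_diff_distrib coeff_monom_mult)
  finally show "coeff (decimate p (x_pow_minus_one (p * d) * b)) i
      = coeff (x_pow_minus_one d * decimate p b) i" .
qed

lemma cyc_ideal_pcompose_monom_cancel:
  assumes "0 < p" and "f \<circ>\<^sub>p monom 1 p \<in> cyc_ideal M (p * d)"
  shows "f \<in> cyc_ideal M d"
proof -
  obtain a b where "f \<circ>\<^sub>p monom 1 p = smult M a + x_pow_minus_one (p * d) * b"
    using assms(2) unfolding mem_cyc_ideal_iff by blast
  then have "decimate p (f \<circ>\<^sub>p monom 1 p) = smult M (decimate p a) + x_pow_minus_one d * decimate p b"
    using assms(1) by (simp add: decimate_add decimate_smult decimate_x_pow_minus_one_mult)
  then have "f = smult M (decimate p a) + x_pow_minus_one d * decimate p b"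
    using decimate_pcompose_monom[OF assms(1), of f] by simp
  then show ?thesis unfolding mem_cyc_ideal_iff by blast
qed

section \<open>Binomial congruences\<close>

lemma binomial_ring_split_linear:
  fixes t b :: "'a::comm_semiring_1"
  assumes "0 < s"
  shows "(t + b) ^ s
    = (\<Sum>k\<in>{2..s}. of_nat (s choose k) * t ^ k * b ^ (s - k)) + of_nat s * t * b ^ (s - 1) + b ^ s"
proof -
  have split: "{..s} = insert 0 (insert 1 {2..s})" using assms by auto
  have "(t + b) ^ s = (\<Sum>k\<le>s. of_nat (s choose k) * t ^ k * b ^ (s - k))"
    by (rule binomial_ring)
  also have "\<dots> = b ^ s + (of_nat s * t * b ^ (s - 1)
      + (\<Sum>k\<in>{2..s}. of_nat (s choose k) * t ^ k * b ^ (s - k)))"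
    unfolding split by simp
  finally show ?thesis by (simp add: algebra_simps)
qed

lemma cyc_ideal_binomial_remainder:
  assumes "t \<in> cyc_ideal A d"
  shows "(t + b) ^ s - b ^ s - of_nat s * t * b ^ (s - 1) \<in> cyc_ideal (A ^ 2) d"
proof (cases "s = 0")
  case False
  have "t ^ k \<in> cyc_ideal (A ^ 2) d" if "2 \<le> k" for k
    using cyc_ideal_power[OF assms, of k] cyc_ideal_power_modulus_mono[OF that] by blast
  then have "(\<Sum>k\<in>{2..s}. of_nat (s choose k) * t ^ k * b ^ (s - k)) \<in> cyc_ideal (A ^ 2) d"
    by (auto intro!: cyc_ideal_sum cyc_ideal_mult_right[OF cyc_ideal_mult_left])
  then show ?thesis using False binomial_ring_split_linear[of s t b] by simp
qed simp

lemma cyc_ideal_binomial_power_prime: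
  assumes "prime q" and "0 < j" and "t \<in> cyc_ideal (int q ^ j) d"
  shows "(t + b) ^ q - b ^ q \<in> cyc_ideal (int q ^ Suc j) d"
proof -
  have "(t + b) ^ q - b ^ q - of_nat q * t * b ^ (q - 1) \<in> cyc_ideal (int q ^ (2 * j)) d"
    using cyc_ideal_binomial_remainder[OF assms(3)] by (simp add: power_mult mult.commute)
  moreover have "Suc j \<le> 2 * j" using assms(2) by simp
  ultimately have "(t + b) ^ q - b ^ q - of_nat q * t * b ^ (q - 1) \<in> cyc_ideal (int q ^ Suc j) d"
    using cyc_ideal_power_modulus_mono by blast
  moreover have "of_nat q * (t * b ^ (q - 1)) \<in> cyc_ideal (int q * int q ^ j) d"
    by (intro cyc_ideal_of_nat_mult cyc_ideal_mult_right assms(3)) simp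
  ultimately show ?thesis using cyc_ideal_add by (fastforce simp: mult.assoc)
qed

text \<open>The middle binomial coefficients supply an extra factor \<open>q\<close>, and \<open>t^q\<close> lies in
  \<open>(q^(3 j), x^d - 1)\<close> because \<open>q \<ge> 3\<close>.\<close>
lemma cyc_ideal_binomial_remainder_prime:
  assumes "prime q" and "odd q" and "0 < j" and t: "t \<in> cyc_ideal (int q ^ j) d"
  shows "(t + b) ^ q - b ^ q - of_nat q * t * b ^ (q - 1) \<in> cyc_ideal (int q ^ (j + 2)) d"
proof -
  have "3 \<le> q" using prime_ge_2_nat[OF assms(1)] assms(2) by (cases "q = 2") auto
  have "{2..q} = insert q {2..<q}" using \<open>3 \<le> q\<close> by auto
  then have "(t + b) ^ q - b ^ q - of_nat q * t * b ^ (q - 1)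
      = t ^ q + (\<Sum>k\<in>{2..<q}. of_nat (q choose k) * (t ^ k * b ^ (q - k)))"
    using binomial_ring_split_linear[of q t b] \<open>3 \<le> q\<close> by (simp add: mult.assoc)
  also have "\<dots> \<in> cyc_ideal (int q ^ (j + 2)) d"
  proof (intro cyc_ideal_add cyc_ideal_sum)
    have "j * 3 \<le> j * q" using \<open>3 \<le> q\<close> by simp
    then have "j + 2 \<le> j * q" using assms(3) by linarith
    then show "t ^ q \<in> cyc_ideal (int q ^ (j + 2)) d"
      using cyc_ideal_power[OF t, of q] cyc_ideal_power_modulus_mono
      by (fastforce simp: power_mult)
  next
    fix k assume k: "k \<in> {2..<q}"
    have "j * 2 \<le> j * k" using k by simp
    then have "j + 1 \<le> j * k" using assms(3) by linarith
    then have "t ^ k * b ^ (q - k) \<in> cyc_ideal (int q ^ (j + 1)) d"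
      using cyc_ideal_power[OF t, of k] cyc_ideal_power_modulus_mono
      by (fastforce simp: power_mult intro: cyc_ideal_mult_right)
    moreover have "int q dvd int (q choose k)" using dvd_choose_prime[of k q] k assms(1) by auto
    ultimately show "of_nat (q choose k) * (t ^ k * b ^ (q - k)) \<in> cyc_ideal (int q ^ (j + 2)) d"
      using cyc_ideal_of_nat_mult by fastforce
  qed
  finally show ?thesis .
qed

lemma cyc_ideal_frobenius:
  assumes "prime q"
  shows "(1 + y) ^ q - 1 - y ^ q \<in> cyc_ideal (int q) d"
proof -
  have "{2..q} = insert q {2..<q}" using prime_ge_2_nat[OF assms] by auto
  then have "(1 + y) ^ q - 1 - y ^ q = (\<Sum>k\<in>{2..<q}. of_nat (q choose k) * y ^ k) + of_nat q * y"
    using binomial_ring_split_linear[of q y 1] prime_gt_0_nat[OF assms] by (simp add: add.commute)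
  also have "\<dots> \<in> cyc_ideal (int q) d"
  proof (intro cyc_ideal_add cyc_ideal_sum)
    fix k assume "k \<in> {2..<q}"
    then have "int q dvd int (q choose k)" using dvd_choose_prime[of k q] assms by auto
    then show "of_nat (q choose k) * y ^ k \<in> cyc_ideal (int q) d"
      using cyc_ideal_of_nat_mult[of q "q choose k" "y ^ k" 1 d] by simp
  qed (use cyc_ideal_of_nat_mult[of q q y 1 d] in simp)
  finally show ?thesis .
qed

lemma binomial_power_mult_diff_one:
  fixes c :: "'a::comm_ring_1"
  shows "(c ^ N * (c ^ P - 1) + c ^ N) ^ q - (c ^ N) ^ q = c ^ (N * q) * (c ^ (P * q) - 1)"
proof -
  have "c ^ N * (c ^ P - 1) + c ^ N = c ^ N * c ^ P" by (simp add: algebra_simps)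
  then show ?thesis by (simp add: power_mult_distrib right_diff_distrib flip: power_mult)
qed

definition one_plus_X :: "int poly" where
  "one_plus_X = [:1, 1:]"

lemma one_plus_X_power_frobenius:
  assumes "prime q"
  shows "one_plus_X ^ (q ^ j) - (1 + monom 1 (q ^ j)) \<in> cyc_ideal (int q) d"
proof (induction j)
  case 0
  have "1 + monom (1::int) 1 = [:1, 1:]" by (simp add: monom_Suc one_pCons)
  then show ?case by (simp add: one_plus_X_def)
next
  case (Suc j)
  have "(one_plus_X ^ (q ^ j)) ^ q - (1 + monom 1 (q ^ j)) ^ q
      + ((1 + monom 1 (q ^ j)) ^ q - 1 - (monom 1 (q ^ j)) ^ q) \<in> cyc_ideal (int q) d"
    by (intro cyc_ideal_add cyc_ideal_power_diff Suc cyc_ideal_frobenius assms)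
  moreover have "(monom (1::int) (q ^ j)) ^ q = monom 1 (q ^ Suc j)"
    by (simp add: monom_power mult.commute)
  moreover have "(one_plus_X ^ (q ^ j)) ^ q = one_plus_X ^ (q ^ Suc j)"
    by (simp add: power_mult[symmetric] mult.commute)
  ultimately show ?case by (simp add: algebra_simps)
qed

section \<open>Eventual periods of multiplication by \<open>1 + x\<close>\<close>

definition ev_period :: "nat \<Rightarrow> nat \<Rightarrow> nat \<Rightarrow> bool" where
  "ev_period m n P \<longleftrightarrow> (\<exists>N. one_plus_X ^ N * (one_plus_X ^ P - 1) \<in> cyc_ideal (int m) n)"

definition min_period :: "nat \<Rightarrow> nat \<Rightarrow> nat" where
  "min_period m n = (LEAST P. 0 < P \<and> ev_period m n P)"

lemma cyc_ideal_power_mult_mono: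
  assumes "c ^ N * u \<in> cyc_ideal M d" and "N \<le> N'"
  shows "c ^ N' * u \<in> cyc_ideal M d"
proof -
  have "c ^ N' * u = c ^ (N' - N) * (c ^ N * u)"
    using assms(2) by (simp add: mult.assoc flip: power_add)
  then show ?thesis by (simp only: cyc_ideal_mult_left[OF assms(1)])
qed

lemma ev_period_dvd:
  assumes "ev_period m n P" and "P dvd P'"
  shows "ev_period m n P'"
proof -
  obtain N where N: "one_plus_X ^ N * (one_plus_X ^ P - 1) \<in> cyc_ideal (int m) n"
    using assms(1) unfolding ev_period_def by blast
  obtain K where "P' = P * K" using assms(2) by (elim dvdE)
  moreover obtain r where "(one_plus_X ^ P) ^ K - 1 = (one_plus_X ^ P - 1) * r"
    using power_minus_one_dvd unfolding dvd_def by blast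
  ultimately have "one_plus_X ^ N * (one_plus_X ^ P' - 1) = one_plus_X ^ N * (one_plus_X ^ P - 1) * r"
    by (simp add: power_mult mult.assoc)
  then show ?thesis unfolding ev_period_def using cyc_ideal_mult_right[OF N] by metis
qed

lemma ev_period_add_cancel:
  assumes "ev_period m n P" and "ev_period m n (P + Q)"
  shows "ev_period m n Q"
proof -
  obtain N N' where N: "one_plus_X ^ N * (one_plus_X ^ P - 1) \<in> cyc_ideal (int m) n"
    and N': "one_plus_X ^ N' * (one_plus_X ^ (P + Q) - 1) \<in> cyc_ideal (int m) n"
    using assms unfolding ev_period_def by blast
  have "one_plus_X ^ (N + N') * (one_plus_X ^ Q - 1)
      = one_plus_X ^ N * (one_plus_X ^ N' * (one_plus_X ^ (P + Q) - 1))
        - (one_plus_X ^ N' * one_plus_X ^ Q) * (one_plus_X ^ N * (one_plus_X ^ P - 1))"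
    by (simp add: algebra_simps power_add)
  also have "\<dots> \<in> cyc_ideal (int m) n"
    by (intro cyc_ideal_diff cyc_ideal_mult_left N N')
  finally show ?thesis unfolding ev_period_def by blast
qed

lemma ev_period_dvd_modulus: "m' dvd m \<Longrightarrow> ev_period m n P \<Longrightarrow> ev_period m' n P"
  unfolding ev_period_def using cyc_ideal_dvd_modulus[of "int m'" "int m"] by auto

lemma cyc_ideal_coprime_mult:
  assumes "coprime A B" and "f \<in> cyc_ideal A d" and "f \<in> cyc_ideal B d"
  shows "f \<in> cyc_ideal (A * B) d"
proof -
  obtain u v where "u * A + v * B = 1"
    using bezout_int[of A B] assms(1) by auto
  then have "f = smult u (smult A f) + smult v (smult B f)"
    by (metis smult_add_left smult_smult smult_1_left mult.commute)
  moreover have "smult A f \<in> cyc_ideal (A * B) d" "smult B f \<in> cyc_ideal (A * B) d"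
    using cyc_ideal_smult_mult[OF assms(3), of A] cyc_ideal_smult_mult[OF assms(2), of B]
    by (simp_all add: mult.commute)
  ultimately show ?thesis by (metis cyc_ideal_add cyc_ideal_smult)
qed

lemma ev_period_coprime_mult:
  assumes "coprime a b" and "ev_period a n P" and "ev_period b n P"
  shows "ev_period (a * b) n P"
proof -
  obtain N N' where "one_plus_X ^ N * (one_plus_X ^ P - 1) \<in> cyc_ideal (int a) n"
    and "one_plus_X ^ N' * (one_plus_X ^ P - 1) \<in> cyc_ideal (int b) n"
    using assms(2,3) unfolding ev_period_def by blast
  then have "one_plus_X ^ (N + N') * (one_plus_X ^ P - 1) \<in> cyc_ideal (int a) n"
    and "one_plus_X ^ (N + N') * (one_plus_X ^ P - 1) \<in> cyc_ideal (int b) n"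
    by (auto intro: cyc_ideal_power_mult_mono)
  then show ?thesis unfolding ev_period_def
    using cyc_ideal_coprime_mult assms(1) by (metis coprime_int_iff of_nat_mult)
qed

lemma ev_period_prod_coprime:
  assumes "finite S" and "pairwise (\<lambda>s s'. coprime (g s) (g s')) S"
    and "\<And>s. s \<in> S \<Longrightarrow> ev_period (g s) n P"
  shows "ev_period (\<Prod>s\<in>S. g s) n P"
  using assms
proof (induction S rule: finite_induct)
  case (insert x S)
  have "coprime (g x) (\<Prod>s\<in>S. g s)"
    using insert.hyps insert.prems(1) by (intro prod_coprime_right) (auto simp: pairwise_insert)
  then show ?case
    using insert by (simp add: ev_period_coprime_mult pairwise_insert)
qed (simp add: ev_period_def)

text \<open>Modulo \<open>q\<close>, \<open>(1 + x)^(q^k) \<equiv> 1 + x^(q^k)\<close>; and \<open>x^(q^(e + f)) \<equiv> x^(q^e)\<close> modulo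
  \<open>x^n - 1\<close>.\<close>
lemma ev_period_prime_upper:
  assumes "prime q" and "n = q ^ e * n'" and "n' dvd q ^ f - 1" and "0 < f"
  shows "ev_period q n (q ^ e * (q ^ f - 1))"
proof -
  obtain r where "q ^ f = Suc r"
    using prime_gt_0_nat[OF assms(1)] by (metis gr0_implies_Suc zero_less_power)
  then have E: "q ^ e + q ^ e * (q ^ f - 1) = q ^ (e + f)" by (simp add: power_add)
  have "n dvd q ^ e * (q ^ f - 1)" unfolding assms(2) using assms(3) by simp
  then have "monom 1 (q ^ e) * x_pow_minus_one (q ^ e * (q ^ f - 1)) \<in> cyc_ideal (int q) n"
    using cyc_ideal_dvd_degree x_pow_minus_one_mult_in_cyc_ideal by (metis mult.commute subsetD)
  moreover have "monom (1::int) (q ^ e) * x_pow_minus_one (q ^ e * (q ^ f - 1))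
      = monom 1 (q ^ (e + f)) - monom 1 (q ^ e)"
    unfolding x_pow_minus_one_def using E by (simp add: algebra_simps mult_monom)
  moreover have "one_plus_X ^ (q ^ j) - (1 + monom 1 (q ^ j)) \<in> cyc_ideal (int q) n" for j
    by (rule one_plus_X_power_frobenius[OF assms(1)])
  ultimately have "one_plus_X ^ (q ^ (e + f)) - (1 + monom 1 (q ^ (e + f)))
      - (one_plus_X ^ (q ^ e) - (1 + monom 1 (q ^ e)))
      + (monom 1 (q ^ (e + f)) - monom 1 (q ^ e)) \<in> cyc_ideal (int q) n"
    by (metis cyc_ideal_add cyc_ideal_diff)
  moreover have "one_plus_X ^ (q ^ e) * (one_plus_X ^ (q ^ e * (q ^ f - 1)) - 1)
      = one_plus_X ^ (q ^ (e + f)) - (1 + monom 1 (q ^ (e + f)))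
        - (one_plus_X ^ (q ^ e) - (1 + monom 1 (q ^ e)))
        + (monom 1 (q ^ (e + f)) - monom 1 (q ^ e))"
    using E by (simp add: algebra_simps flip: power_add)
  ultimately show ?thesis unfolding ev_period_def by (metis of_nat_eq_iff)
qed

lemma ev_period_prime:
  assumes "prime p" and "0 < n"
  obtains Q where "0 < Q" and "ev_period p n Q" and "\<not> p ^ Suc (multiplicity p n) dvd Q"
proof -
  define e where "e = multiplicity p n"
  obtain n' where n': "n = p ^ e * n'" "\<not> p dvd n'"
    using multiplicity_decompose'[of n p] assms not_prime_unit unfolding e_def by blast
  have "0 < n'" using n' assms(2) by (cases "n' = 0") auto
  define f where "f = totient n'"
  have "0 < f" unfolding f_def using \<open>0 < n'\<close> by simp
  have "[p ^ f = 1] (mod n')"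
    unfolding f_def using euler_theorem[of p n'] prime_imp_coprime_nat[OF assms(1) n'(2)] by simp
  then have "n' dvd p ^ f - 1" by (rule cong_to_1_nat)
  then have "ev_period p n (p ^ e * (p ^ f - 1))"
    by (rule ev_period_prime_upper[OF assms(1) n'(1) _ \<open>0 < f\<close>])
  moreover have "\<not> p ^ Suc e dvd p ^ e * (p ^ f - 1)"
  proof
    assume "p ^ Suc e dvd p ^ e * (p ^ f - 1)"
    then have "p dvd p ^ f - 1"
      using assms(1) by (simp add: power_Suc2 prime_gt_0_nat del: power_Suc)
    moreover have "p dvd p ^ f" using \<open>0 < f\<close> by (simp add: dvd_power)
    ultimately have "p dvd p ^ f - (p ^ f - 1)" by (simp add: dvd_diff_nat)
    moreover have "0 < p ^ f" using prime_gt_0_nat[OF assms(1)] by simp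
    then have "p ^ f - (p ^ f - 1) = 1" by linarith
    ultimately show False using assms(1) by simp
  qed
  moreover have "1 < p ^ f" using prime_gt_1_nat[OF assms(1)] \<open>0 < f\<close> by (rule one_less_power)
  then have "0 < p ^ e * (p ^ f - 1)" using prime_gt_0_nat[OF assms(1)] by simp
  ultimately show ?thesis using that unfolding e_def by blast
qed

lemma ev_period_prime_power_lift:
  assumes "prime q" and "ev_period q n Q"
  shows "ev_period (q ^ Suc k) n (Q * q ^ k)"
proof (induction k)
  case 0
  show ?case using assms(2) by simp
next
  case (Suc k)
  then obtain N where N: "one_plus_X ^ N * (one_plus_X ^ (Q * q ^ k) - 1) \<in> cyc_ideal (int q ^ Suc k) n"
    unfolding ev_period_def by auto
  then have "(one_plus_X ^ N * (one_plus_X ^ (Q * q ^ k) - 1) + one_plus_X ^ N) ^ q - (one_plus_X ^ N) ^ q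
      \<in> cyc_ideal (int q ^ Suc (Suc k)) n"
    by (rule cyc_ideal_binomial_power_prime[OF assms(1), rotated]) simp
  moreover have "Q * q ^ k * q = Q * q ^ Suc k" by simp
  ultimately have "one_plus_X ^ (N * q) * (one_plus_X ^ (Q * q ^ Suc k) - 1) \<in> cyc_ideal (int q ^ Suc (Suc k)) n"
    by (simp only: binomial_power_mult_diff_one)
  then show ?case unfolding ev_period_def by (metis of_nat_power)
qed

lemma pairwise_coprime_prime_factor_powers:
  "pairwise (\<lambda>p p'. coprime (p ^ f p) (p' ^ f p')) (prime_factors (m :: nat))"
  unfolding pairwise_def
proof (intro ballI impI)
  fix p p' assume "p \<in> prime_factors m" "p' \<in> prime_factors m" "p \<noteq> p'"
  then have "coprime p p'" by (intro primes_coprime) auto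
  then show "coprime (p ^ f p) (p' ^ f p')" by simp
qed

lemma ev_period_exists:
  assumes "0 < m" and "0 < n"
  shows "\<exists>P>0. ev_period m n P"
proof -
  have "\<exists>P>0. ev_period (p ^ multiplicity p m) n P" if "p \<in> prime_factors m" for p
  proof -
    have p: "prime p" and k: "0 < multiplicity p m"
      using that assms(1) by (auto simp: prime_factors_multiplicity)
    obtain Q where "0 < Q" "ev_period p n Q" using ev_period_prime[OF p assms(2)] by blast
    then show ?thesis
      using ev_period_prime_power_lift[OF p, of n Q "multiplicity p m - 1"] k p
      by (intro exI[of _ "Q * p ^ (multiplicity p m - 1)"]) (auto simp: prime_gt_0_nat)
  qed
  then obtain P where P: "\<And>p. p \<in> prime_factors m \<Longrightarrow> 0 < P p \<and> ev_period (p ^ multiplicity p m) n (P p)"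
    by metis
  have "ev_period (\<Prod>p\<in>prime_factors m. p ^ multiplicity p m) n (\<Prod>p\<in>prime_factors m. P p)"
  proof (rule ev_period_prod_coprime)
    show "pairwise (\<lambda>p p'. coprime (p ^ multiplicity p m) (p' ^ multiplicity p' m)) (prime_factors m)"
      by (rule pairwise_coprime_prime_factor_powers)
    show "ev_period (p ^ multiplicity p m) n (\<Prod>p\<in>prime_factors m. P p)"
      if "p \<in> prime_factors m" for p
      using that P by (blast intro: ev_period_dvd dvd_prodI)
  qed simp
  then have "ev_period m n (\<Prod>p\<in>prime_factors m. P p)"
    using prod_prime_factors[of m] assms(1) by simp
  moreover have "0 < (\<Prod>p\<in>prime_factors m. P p)" using P by (intro prod_pos) blast
  ultimately show ?thesis by blast
qed

lemma
  assumes "0 < m" and "0 < n"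
  shows min_period_pos: "0 < min_period m n"
    and ev_period_min_period: "ev_period m n (min_period m n)"
proof -
  have "0 < min_period m n \<and> ev_period m n (min_period m n)"
    unfolding min_period_def by (rule LeastI_ex) (rule ev_period_exists[OF assms])
  then show "0 < min_period m n" "ev_period m n (min_period m n)" by simp_all
qed

lemma ev_period_iff_min_period_dvd:
  assumes "0 < m" and "0 < n"
  shows "ev_period m n P \<longleftrightarrow> min_period m n dvd P"
proof
  assume P: "ev_period m n P"
  define r where "r = P mod min_period m n"
  have "ev_period m n (min_period m n * (P div min_period m n))"
    using ev_period_min_period[OF assms] by (rule ev_period_dvd) simp
  moreover have "ev_period m n (min_period m n * (P div min_period m n) + r)"
    using P unfolding r_def by simp
  ultimately have "ev_period m n r" by (rule ev_period_add_cancel)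
  moreover have "r < min_period m n" unfolding r_def using min_period_pos[OF assms] by simp
  moreover have "\<not> (0 < r \<and> ev_period m n r)"
    using not_less_Least[of r "\<lambda>P. 0 < P \<and> ev_period m n P"] \<open>r < min_period m n\<close>
    unfolding min_period_def by blast
  ultimately have "r = 0" by simp
  then show "min_period m n dvd P" unfolding r_def by (simp add: dvd_eq_mod_eq_0)
qed (use ev_period_min_period[OF assms] ev_period_dvd in blast)

lemma min_period_prod_coprime:
  assumes "finite S" and "pairwise (\<lambda>s s'. coprime (g s) (g s')) S"
    and "\<And>s. s \<in> S \<Longrightarrow> 0 < g s" and "0 < n"
  shows "min_period (\<Prod>s\<in>S. g s) n = Lcm ((\<lambda>s. min_period (g s) n) ` S)"
proof (rule dvd_antisym)
  have prod_pos: "0 < (\<Prod>s\<in>S. g s)" using assms(3) by (simp add: prod_pos)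
  let ?L = "Lcm ((\<lambda>s. min_period (g s) n) ` S)"
  have "ev_period (g s) n ?L" if "s \<in> S" for s
    using that ev_period_iff_min_period_dvd[OF assms(3)[OF that] assms(4)] by auto
  then have "ev_period (\<Prod>s\<in>S. g s) n ?L" by (rule ev_period_prod_coprime[OF assms(1,2)])
  then show "min_period (\<Prod>s\<in>S. g s) n dvd ?L"
    using ev_period_iff_min_period_dvd[OF prod_pos assms(4)] by blast
  have "min_period (g s) n dvd min_period (\<Prod>s\<in>S. g s) n" if "s \<in> S" for s
  proof -
    have "g s dvd (\<Prod>s\<in>S. g s)" using that assms(1) by (intro dvd_prodI)
    then have "ev_period (g s) n (min_period (\<Prod>s\<in>S. g s) n)"
      using ev_period_dvd_modulus ev_period_min_period[OF prod_pos assms(4)] by blast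
    then show ?thesis using ev_period_iff_min_period_dvd[OF assms(3)[OF that] assms(4)] by blast
  qed
  then show "?L dvd min_period (\<Prod>s\<in>S. g s) n" by (auto intro: Lcm_least)
qed

section \<open>Periods modulo powers of a non-Wieferich prime\<close>

text \<open>Let \<open>a = (1 + x)^N\<close> and \<open>u = (1 + x)^(Q q^i) - 1\<close>, with \<open>a u \<in> (q^(i + 1), x^n - 1)\<close> by
  lifting. Modulo \<open>q^(i + 3)\<close> the binomial theorem gives \<open>(a u + a)^q - a^q \<equiv> q a^q u\<close>. The
  left-hand side is \<open>(1 + x)^(N q) ((1 + x)^(Q q^(i + 1)) - 1)\<close>, which the hypothesis kills
  after multiplication by a power of \<open>1 + x\<close>; then one factor \<open>q\<close> cancels.\<close>
lemma ev_period_prime_power_descent_step: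
  assumes "prime q" and "odd q" and "0 < n" and "ev_period q n Q"
    and "ev_period (q ^ (i + 3)) n (Q * q ^ Suc i)"
  shows "ev_period (q ^ (i + 2)) n (Q * q ^ i)"
proof -
  obtain N where N: "one_plus_X ^ N * (one_plus_X ^ (Q * q ^ i) - 1) \<in> cyc_ideal (int q ^ Suc i) n"
    using ev_period_prime_power_lift[OF assms(1,4), of i] unfolding ev_period_def by auto
  obtain N' where N': "one_plus_X ^ N' * (one_plus_X ^ (Q * q ^ Suc i) - 1) \<in> cyc_ideal (int q ^ (i + 3)) n"
    using assms(5) unfolding ev_period_def by auto
  define a where "a = one_plus_X ^ N"
  define u where "u = one_plus_X ^ (Q * q ^ i) - 1"
  define v where "v = one_plus_X ^ (N * q) * (one_plus_X ^ (Q * q ^ Suc i) - 1)"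
  have "(a * u + a) ^ q - a ^ q - of_nat q * (a * u) * a ^ (q - 1) \<in> cyc_ideal (int q ^ (Suc i + 2)) n"
    using cyc_ideal_binomial_remainder_prime[OF assms(1,2) _ N[folded a_def u_def]] by simp
  moreover have "(a * u + a) ^ q - a ^ q = v"
    unfolding a_def u_def v_def binomial_power_mult_diff_one by (simp add: ac_simps)
  moreover have "of_nat q * (a * u) * a ^ (q - 1) = smult (int q) (one_plus_X ^ (N * q) * u)"
  proof -
    have "of_nat q * (a * u) * a ^ (q - 1) = smult (int q) ((a * a ^ (q - 1)) * u)"
      by (simp add: of_nat_poly ac_simps)
    also have "a * a ^ (q - 1) = one_plus_X ^ (N * q)"
      using prime_gt_0_nat[OF assms(1)] unfolding a_def by (simp add: power_mult flip: power_Suc)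
    finally show ?thesis .
  qed
  ultimately have lifted: "v - smult (int q) (one_plus_X ^ (N * q) * u) \<in> cyc_ideal (int q ^ (i + 3)) n"
    by (simp add: numeral_3_eq_3)
  have "smult (int q) (one_plus_X ^ (N * q + N') * u)
      = one_plus_X ^ (N * q) * (one_plus_X ^ N' * (one_plus_X ^ (Q * q ^ Suc i) - 1))
        - one_plus_X ^ N' * (v - smult (int q) (one_plus_X ^ (N * q) * u))"
    unfolding v_def by (simp add: algebra_simps power_add)
  also have "\<dots> \<in> cyc_ideal (int q * int q ^ (i + 2)) n"
    using cyc_ideal_diff[OF cyc_ideal_mult_left[OF N'] cyc_ideal_mult_left[OF lifted]]
    by (simp add: numeral_3_eq_3)
  finally have "one_plus_X ^ (N * q + N') * u \<in> cyc_ideal (int q ^ (i + 2)) n"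
    using assms(1,3) by (elim cyc_ideal_smult_cancel) auto
  then show ?thesis unfolding ev_period_def u_def by (metis of_nat_power)
qed

lemma ev_period_prime_power_descent:
  assumes "prime q" and "odd q" and "0 < n" and "ev_period q n Q"
  shows "ev_period (q ^ (i + 2)) n (Q * q ^ i) \<Longrightarrow> ev_period (q ^ 2) n Q"
proof (induction i)
  case (Suc i)
  then show ?case
    using ev_period_prime_power_descent_step[OF assms, of i] by (simp add: numeral_3_eq_3)
qed (simp add: power2_eq_square)

lemma not_wieferich_dvd_exponent:
  assumes "prime p" and "odd p" and "\<not> wieferich p" and "[2 ^ Q = 1] (mod p ^ 2)"
  shows "p dvd Q"
proof (rule ccontr)
  assume "\<not> p dvd Q"
  have "coprime (p ^ 2) 2"
    using assms(2) by (simp add: coprime_commute)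
  then have "ord (p ^ 2) 2 dvd p * (p - 1)"
    using order_divides_totient[OF \<open>coprime (p ^ 2) 2\<close>] totient_prime_power[OF assms(1), of 2]
    by simp
  moreover have "ord (p ^ 2) 2 dvd Q" using assms(4) ord_divides by blast
  then have "coprime (ord (p ^ 2) 2) p"
    using \<open>\<not> p dvd Q\<close> prime_imp_coprime_nat[OF assms(1)] dvd_trans coprime_commute by blast
  ultimately have "ord (p ^ 2) 2 dvd p - 1" using coprime_dvd_mult_right_iff by blast
  then have "[2 ^ (p - 1) = 1] (mod p ^ 2)" using ord_divides by blast
  then show False using assms(1,3) unfolding wieferich_def by simp
qed

lemma one_plus_X_order_base:
  assumes "prime p" and "odd p" and "\<not> wieferich p"
    and "one_plus_X ^ Q - 1 \<in> cyc_ideal (int p ^ 2) 1"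
  shows "p dvd Q"
proof (rule not_wieferich_dvd_exponent[OF assms(1-3)])
  have "int p ^ 2 dvd 2 ^ Q - 1"
    using cyc_ideal_one_poly_dvd[OF assms(4)] by (simp add: one_plus_X_def)
  then show "[2 ^ Q = 1] (mod p ^ 2)"
    by (metis cong_iff_dvd_diff cong_int_iff of_nat_1 of_nat_numeral of_nat_power)
qed

definition middle_binomials :: "nat \<Rightarrow> int poly" where
  "middle_binomials p = (\<Sum>k\<in>{1..<p}. monom (int (p choose k) div int p) k)"

lemma one_plus_X_power_prime:
  assumes "prime p"
  shows "one_plus_X ^ p = [:2:] + smult (int p) (middle_binomials p) + x_pow_minus_one p"
proof -
  have p: "0 < p" using prime_gt_0_nat[OF assms] .
  have "one_plus_X ^ p = (monom 1 1 + 1) ^ p"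
    by (simp add: one_plus_X_def monom_Suc one_pCons)
  also have "\<dots> = (\<Sum>k\<le>p. of_nat (p choose k) * monom 1 k)"
    by (simp add: binomial_ring monom_power)
  also have "{..p} = insert 0 (insert p {1..<p})" using p by auto
  also have "(\<Sum>k\<in>insert 0 (insert p {1..<p}). of_nat (p choose k) * (monom 1 k :: int poly))
      = 1 + monom 1 p + (\<Sum>k\<in>{1..<p}. of_nat (p choose k) * monom 1 k)"
    using p by (simp add: monom_0 one_pCons)
  also have "(\<Sum>k\<in>{1..<p}. of_nat (p choose k) * (monom 1 k :: int poly))
      = (\<Sum>k\<in>{1..<p}. smult (int p) (monom (int (p choose k) div int p) k))"
  proof (rule sum.cong)
    fix k assume "k \<in> {1..<p}"
    then have "int p dvd int (p choose k)" using dvd_choose_prime[of k p] assms by auto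
    then show "of_nat (p choose k) * monom 1 k = smult (int p) (monom (int (p choose k) div int p) k)"
      by (simp add: of_nat_poly smult_monom)
  qed simp
  also have "\<dots> = smult (int p) (middle_binomials p)"
    unfolding middle_binomials_def by (simp add: smult_sum_right)
  finally show ?thesis unfolding x_pow_minus_one_def by (simp add: one_pCons algebra_simps numeral_poly)
qed

lemma degree_middle_binomials: "0 < p \<Longrightarrow> degree (middle_binomials p) < p"
proof -
  assume "0 < p"
  have "degree (middle_binomials p) \<le> p - 1" unfolding middle_binomials_def
    by (rule degree_sum_le) (auto intro: order.trans[OF degree_monom_le])
  then show ?thesis using \<open>0 < p\<close> by simp
qed

lemma coeff_middle_binomials_1: "2 \<le> p \<Longrightarrow> coeff (middle_binomials p) 1 = 1"
  by (simp add: middle_binomials_def coeff_sum coeff_monom)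

text \<open>Write \<open>Q = p s\<close> and \<open>(1 + x)^p \<equiv> 2 + p w\<close> with \<open>w = middle_binomials p\<close>. Modulo \<open>p^2\<close>
  the binomial theorem gives \<open>(1 + x)^Q - 1 \<equiv> 2^s - 1 + s p 2^(s - 1) w\<close>, a polynomial of
  degree \<open>< p\<close> with linear coefficient \<open>s p 2^(s - 1)\<close>.\<close>
lemma one_plus_X_order_first:
  assumes "prime p" and "odd p" and "p dvd Q"
    and "one_plus_X ^ Q - 1 \<in> cyc_ideal (int p ^ 2) p"
  shows "p ^ 2 dvd Q"
proof -
  obtain s where Q: "Q = p * s" using assms(3) by (elim dvdE)
  define t where "t = smult (int p) (middle_binomials p)"
  define g where "g = [:2 ^ s - 1:] + smult (int s * int p * 2 ^ (s - 1)) (middle_binomials p)"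
  have "one_plus_X ^ p - ([:2:] + t) \<in> cyc_ideal (int p ^ 2) p"
    using one_plus_X_power_prime[OF assms(1)] x_pow_minus_one_mult_in_cyc_ideal[of p 1]
    unfolding t_def by simp
  then have "(one_plus_X ^ p) ^ s - ([:2:] + t) ^ s \<in> cyc_ideal (int p ^ 2) p"
    by (rule cyc_ideal_power_diff)
  moreover have "(t + [:2:]) ^ s - [:2:] ^ s - of_nat s * t * [:2:] ^ (s - 1) \<in> cyc_ideal (int p ^ 2) p"
    by (rule cyc_ideal_binomial_remainder) (simp add: t_def smult_in_cyc_ideal)
  moreover have "g = one_plus_X ^ Q - 1 - ((one_plus_X ^ p) ^ s - ([:2:] + t) ^ s)
      - ((t + [:2:]) ^ s - [:2:] ^ s - of_nat s * t * [:2:] ^ (s - 1))"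
    unfolding g_def t_def Q
    by (simp add: power_mult algebra_simps poly_const_pow of_nat_poly one_pCons)
  ultimately have "g \<in> cyc_ideal (int p ^ 2) p"
    using assms(4) by (metis cyc_ideal_diff)
  moreover have "degree g < p"
    using degree_middle_binomials[of p] prime_gt_0_nat[OF assms(1)] prime_ge_2_nat[OF assms(1)]
    unfolding g_def by (intro degree_add_less) (auto intro: le_less_trans[OF degree_smult_le])
  ultimately have "int p ^ 2 dvd coeff g 1"
    using prime_gt_0_nat[OF assms(1)] by (intro cyc_ideal_low_degree_coeff_dvd)
  then have "int p * int p dvd int p * (int s * 2 ^ (s - 1))"
    using coeff_middle_binomials_1 prime_ge_2_nat[OF assms(1)] unfolding g_def
    by (simp add: power2_eq_square ac_simps)
  then have "int p dvd int (s * 2 ^ (s - 1))" using prime_gt_0_nat[OF assms(1)] by simp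
  then have "p dvd s * 2 ^ (s - 1)" by (simp only: int_dvd_int_iff)
  moreover have "\<not> p dvd 2 ^ (s - 1)"
  proof
    assume "p dvd 2 ^ (s - 1)"
    then have "p dvd 2" using assms(1) prime_dvd_power by blast
    then show False
      using assms(2) prime_ge_2_nat[OF assms(1)] dvd_imp_le[of p 2] by (cases "p = 2") auto
  qed
  ultimately have "p dvd s" using assms(1) prime_dvd_mult_iff by blast
  then show ?thesis unfolding Q by (simp add: power2_eq_square)
qed

text \<open>Modulo \<open>p^2\<close>, \<open>(1 + x)^(p^2) \<equiv> (1 + x^p)^p\<close>; so for \<open>Q = p^2 K\<close> the polynomial
  \<open>(1 + x)^Q - 1\<close> is congruent to the image of \<open>(1 + x)^(p K) - 1\<close> under \<open>x \<mapsto> x^p\<close>.\<close>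
lemma one_plus_X_order_reduce:
  assumes "prime p" and "p ^ 2 dvd Q"
    and "one_plus_X ^ Q - 1 \<in> cyc_ideal (int p ^ 2) (p * d)"
  shows "one_plus_X ^ (Q div p) - 1 \<in> cyc_ideal (int p ^ 2) d"
proof -
  obtain K where Q: "Q = p * p * K" using assms(2) by (auto simp: power2_eq_square elim!: dvdE)
  define B where "B = 1 + monom (1::int) p"
  have "one_plus_X ^ p - B \<in> cyc_ideal (int p ^ 1) (p * d)"
    using one_plus_X_power_frobenius[OF assms(1), of 1] unfolding B_def by simp
  then have "(one_plus_X ^ p - B + B) ^ p - B ^ p \<in> cyc_ideal (int p ^ Suc 1) (p * d)"
    by (rule cyc_ideal_binomial_power_prime[OF assms(1), rotated]) simp
  then have "(one_plus_X ^ p) ^ p - B ^ p \<in> cyc_ideal (int p ^ 2) (p * d)"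
    by (simp add: numeral_2_eq_2)
  then have "((one_plus_X ^ p) ^ p) ^ K - (B ^ p) ^ K \<in> cyc_ideal (int p ^ 2) (p * d)"
    by (rule cyc_ideal_power_diff)
  then have "one_plus_X ^ Q - B ^ (p * K) \<in> cyc_ideal (int p ^ 2) (p * d)"
    unfolding Q by (simp add: power_mult)
  then have "(one_plus_X ^ Q - 1) - (one_plus_X ^ Q - B ^ (p * K)) \<in> cyc_ideal (int p ^ 2) (p * d)"
    by (rule cyc_ideal_diff[OF assms(3)])
  moreover have "(one_plus_X ^ Q - 1) - (one_plus_X ^ Q - B ^ (p * K)) = B ^ (p * K) - 1"
    by simp
  moreover have "one_plus_X \<circ>\<^sub>p monom 1 p = B"
    unfolding one_plus_X_def B_def by (simp add: pcompose_pCons one_pCons)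
  then have "(one_plus_X ^ (p * K) - 1) \<circ>\<^sub>p monom 1 p = B ^ (p * K) - 1"
    by (simp add: pcompose_diff pcompose_power pcompose_1)
  ultimately have "(one_plus_X ^ (p * K) - 1) \<circ>\<^sub>p monom 1 p \<in> cyc_ideal (int p ^ 2) (p * d)"
    by (simp only:)
  then have "one_plus_X ^ (p * K) - 1 \<in> cyc_ideal (int p ^ 2) d"
    by (rule cyc_ideal_pcompose_monom_cancel[OF prime_gt_0_nat[OF assms(1)]])
  then show ?thesis unfolding Q using prime_gt_0_nat[OF assms(1)] by simp
qed

lemma one_plus_X_order_dvd:
  assumes "prime p" and "odd p" and "\<not> wieferich p"
  shows "one_plus_X ^ Q - 1 \<in> cyc_ideal (int p ^ 2) (p ^ e) \<Longrightarrow> p ^ Suc e dvd Q"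
proof (induction e arbitrary: Q)
  case 0
  then show ?case using one_plus_X_order_base[OF assms] by simp
next
  case (Suc e)
  have "one_plus_X ^ Q - 1 \<in> cyc_ideal (int p ^ 2) (p ^ e)"
    using Suc.prems cyc_ideal_dvd_degree[of "p ^ e" "p ^ Suc e"] by auto
  then have IH: "p ^ Suc e dvd Q" by (rule Suc.IH)
  show ?case
  proof (cases "e = 0")
    case True
    then have "p dvd Q" "one_plus_X ^ Q - 1 \<in> cyc_ideal (int p ^ 2) p"
      using IH Suc.prems by simp_all
    then show ?thesis using True one_plus_X_order_first[OF assms(1,2)] by (simp add: numeral_2_eq_2)
  next
    case False
    then have "p ^ 2 dvd p ^ Suc e" by (intro le_imp_power_dvd) simp
    then have "p ^ 2 dvd Q" using IH by (rule dvd_trans)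
    then have "one_plus_X ^ (Q div p) - 1 \<in> cyc_ideal (int p ^ 2) (p ^ e)"
      using one_plus_X_order_reduce[OF assms(1)] Suc.prems by simp
    then have "p ^ Suc e dvd Q div p" by (rule Suc.IH)
    moreover have "p dvd Q" using \<open>p ^ 2 dvd Q\<close> by (simp add: power2_eq_square dvd_mult_left)
    ultimately show ?thesis by (metis dvd_mult_div_cancel mult_dvd_mono dvd_refl power_Suc)
  qed
qed

lemma two_inverse_identity:
  fixes T P h :: "'a::comm_ring_1"
  assumes "2 * T = P + 1"
  shows "T * (2 + h) * (1 - T * h) - 1 = P * (1 - T * h) - T ^ 2 * (h * h)"
proof -
  have "T * (2 + h) * (1 - T * h) - 1 - (P * (1 - T * h) - T ^ 2 * (h * h))
      = (2 * T - (P + 1)) * (1 - T * h)"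
    by (simp add: algebra_simps power2_eq_square)
  then show ?thesis using assms by simp
qed

text \<open>Modulo \<open>(p, x^d - 1)\<close> with \<open>d = p^e\<close>, \<open>(1 + x)^d \<equiv> 1 + x^d \<equiv> 2\<close>, and \<open>2\<close> is invertible
  modulo \<open>p^2\<close> by the identity above.\<close>
lemma one_plus_X_unit:
  assumes "prime p" and "odd p"
  obtains G where "one_plus_X * G - 1 \<in> cyc_ideal (int p ^ 2) (p ^ e)"
proof -
  let ?d = "p ^ e"
  define h where "h = one_plus_X ^ ?d - 2"
  have "h = (one_plus_X ^ ?d - (1 + monom 1 ?d)) + x_pow_minus_one ?d * 1"
    unfolding h_def x_pow_minus_one_def by simp
  then have h: "h \<in> cyc_ideal (int p) ?d"
    using one_plus_X_power_frobenius[OF assms(1)] x_pow_minus_one_mult_in_cyc_ideal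
    by (metis cyc_ideal_add)
  have "even (int p ^ 2 + 1)" using assms(2) by simp
  then obtain t :: int where "int p ^ 2 + 1 = 2 * t" by (elim evenE)
  then have "2 * of_int t = of_int (int p ^ 2) + (1 :: int poly)"
    by (metis of_int_add of_int_mult of_int_numeral of_int_1)
  then have "of_int t * (2 + h) * (1 - of_int t * h) - 1
      = of_int (int p ^ 2) * (1 - of_int t * h) - of_int t ^ 2 * (h * h)"
    by (rule two_inverse_identity)
  moreover have "of_int (int p ^ 2) * (1 - of_int t * h) \<in> cyc_ideal (int p ^ 2) ?d"
    by (simp add: of_int_poly smult_in_cyc_ideal)
  moreover have "h * h \<in> cyc_ideal (int p ^ 2) ?d"
    using cyc_ideal_mult[OF h h] by (simp add: power2_eq_square)
  ultimately have "of_int t * (2 + h) * (1 - of_int t * h) - 1 \<in> cyc_ideal (int p ^ 2) ?d"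
    by (metis cyc_ideal_diff cyc_ideal_mult_left)
  moreover have "2 + h = one_plus_X * one_plus_X ^ (?d - 1)"
    using prime_gt_0_nat[OF assms(1)] unfolding h_def by (simp flip: power_Suc)
  ultimately show ?thesis
    using that[of "of_int t * one_plus_X ^ (?d - 1) * (1 - of_int t * h)"] by (simp add: ac_simps)
qed

lemma ev_period_prime_square_dvd:
  assumes "prime p" and "odd p" and "\<not> wieferich p" and "p ^ e dvd n"
    and "ev_period (p ^ 2) n Q"
  shows "p ^ Suc e dvd Q"
proof -
  obtain N where "one_plus_X ^ N * (one_plus_X ^ Q - 1) \<in> cyc_ideal (int p ^ 2) n"
    using assms(5) unfolding ev_period_def by auto
  then have N: "one_plus_X ^ N * (one_plus_X ^ Q - 1) \<in> cyc_ideal (int p ^ 2) (p ^ e)"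
    using cyc_ideal_dvd_degree[OF assms(4)] by blast
  obtain G where G: "one_plus_X * G - 1 \<in> cyc_ideal (int p ^ 2) (p ^ e)"
    using one_plus_X_unit[OF assms(1,2)] by blast
  have "(one_plus_X * G) ^ N - 1 ^ N \<in> cyc_ideal (int p ^ 2) (p ^ e)"
    using G by (rule cyc_ideal_power_diff)
  then have "((one_plus_X * G) ^ N - 1) * (one_plus_X ^ Q - 1) \<in> cyc_ideal (int p ^ 2) (p ^ e)"
    by (simp add: cyc_ideal_mult_right)
  then have "G ^ N * (one_plus_X ^ N * (one_plus_X ^ Q - 1)) - ((one_plus_X * G) ^ N - 1) * (one_plus_X ^ Q - 1)
      \<in> cyc_ideal (int p ^ 2) (p ^ e)"
    by (rule cyc_ideal_diff[OF cyc_ideal_mult_left[OF N]])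
  moreover have "G ^ N * (one_plus_X ^ N * (one_plus_X ^ Q - 1)) - ((one_plus_X * G) ^ N - 1) * (one_plus_X ^ Q - 1)
      = one_plus_X ^ Q - 1"
    by (simp add: algebra_simps power_mult_distrib)
  ultimately show ?thesis using one_plus_X_order_dvd[OF assms(1-3)] by simp
qed

lemma not_ev_period_prime_square_min_period:
  assumes "prime p" and "odd p" and "\<not> wieferich p" and "0 < n"
  shows "\<not> ev_period (p ^ 2) n (min_period p n)"
proof
  assume "ev_period (p ^ 2) n (min_period p n)"
  then have "p ^ Suc (multiplicity p n) dvd min_period p n"
    using ev_period_prime_square_dvd[OF assms(1-3) multiplicity_dvd] by blast
  moreover obtain Q where "ev_period p n Q" and "\<not> p ^ Suc (multiplicity p n) dvd Q"
    using ev_period_prime[OF assms(1,4)] by blast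
  ultimately show False
    using ev_period_iff_min_period_dvd[OF prime_gt_0_nat[OF assms(1)] assms(4)] dvd_trans by blast
qed

lemma min_period_prime_power:
  assumes "prime p" and "odd p" and "\<not> wieferich p" and "0 < n" and "0 < k"
  shows "min_period (p ^ k) n = p ^ (k - 1) * min_period p n"
proof -
  have p: "0 < p" "0 < p ^ k" using prime_gt_0_nat[OF assms(1)] by simp_all
  define a where "a = min_period p n"
  define b where "b = min_period (p ^ k) n"
  have "ev_period p n b"
    using ev_period_dvd_modulus[OF _ ev_period_min_period[OF p(2) assms(4)]] assms(5)
    unfolding b_def by (simp add: dvd_power)
  then have "a dvd b" unfolding a_def using ev_period_iff_min_period_dvd[OF p(1) assms(4)] by blast
  then obtain j where j: "b = a * j" by (elim dvdE)
  have "ev_period (p ^ k) n (a * p ^ (k - 1))"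
    using ev_period_prime_power_lift[OF assms(1) ev_period_min_period[OF p(1) assms(4)]] assms(5)
    unfolding a_def by (metis Suc_diff_1)
  then have "b dvd a * p ^ (k - 1)" unfolding b_def using ev_period_iff_min_period_dvd[OF p(2) assms(4)] by blast
  then have "j dvd p ^ (k - 1)" using min_period_pos[OF p(1) assms(4)] unfolding j a_def by simp
  then obtain i where i: "i \<le> k - 1" "j = p ^ i" using divides_primepow_nat[OF assms(1)] by blast
  have "i = k - 1"
  proof (rule ccontr)
    assume "i \<noteq> k - 1"
    define l where "l = k - 2"
    have kl: "k = l + 2" "i \<le> l" using i(1) \<open>i \<noteq> k - 1\<close> unfolding l_def by auto
    then have "b dvd a * p ^ l" unfolding j i(2) by (simp add: le_imp_power_dvd)
    then have "ev_period (p ^ (l + 2)) n (a * p ^ l)"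
      using ev_period_iff_min_period_dvd[OF p(2) assms(4)] unfolding b_def kl by blast
    then have "ev_period (p ^ 2) n a"
      by (rule ev_period_prime_power_descent[OF assms(1,2,4) ev_period_min_period[OF p(1) assms(4), folded a_def]])
    then show False using not_ev_period_prime_square_min_period[OF assms(1-4)] unfolding a_def by blast
  qed
  then show ?thesis using i j unfolding a_def b_def by simp
qed

section \<open>The map \<open>T\<close> as multiplication by \<open>1 + x\<close>\<close>

text \<open>The vector \<open>a\<close> is encoded as \<open>\<Sum>\<^sub>j a((n - j) mod n) x^j\<close>; with this reversal of
  indices, \<open>T\<close> becomes multiplication by \<open>1 + x\<close> modulo \<open>(m, x^n - 1)\<close>.\<close>
definition vec_poly :: "nat \<Rightarrow> (nat \<Rightarrow> nat) \<Rightarrow> int poly" where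
  "vec_poly n a = Poly (map (\<lambda>j. int (a ((n - j) mod n))) [0..<n])"

lemma coeff_vec_poly: "coeff (vec_poly n a) j = (if j < n then int (a ((n - j) mod n)) else 0)"
  unfolding vec_poly_def coeff_Poly_eq by (simp add: nth_default_def)

lemma degree_vec_poly_diff: "0 < n \<Longrightarrow> degree (vec_poly n a - vec_poly n b) < n"
proof -
  assume "0 < n"
  have "degree (vec_poly n a - vec_poly n b) \<le> n - 1"
    by (rule degree_le) (auto simp: coeff_vec_poly)
  then show ?thesis using \<open>0 < n\<close> by linarith
qed

lemma Tmap_in_vecs: "0 < m \<Longrightarrow> a \<in> vecs m n \<Longrightarrow> Tmap m n a \<in> vecs m n"
  unfolding vecs_def Tmap_def by auto

lemma Tmap_iter_in_vecs: "0 < m \<Longrightarrow> a \<in> vecs m n \<Longrightarrow> (Tmap m n ^^ k) a \<in> vecs m n"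
  by (induction k) (auto intro: Tmap_in_vecs)

lemma int_dvd_diff_mod: "int m dvd int x - int (x mod m)"
  by (simp add: of_nat_mod minus_mod_eq_mult_div)

lemma vec_poly_Tmap:
  assumes "0 < n" and "a \<in> vecs m n"
  shows "one_plus_X * vec_poly n a - vec_poly n (Tmap m n a) \<in> cyc_ideal (int m) n"
proof -
  define c where "c = int (a (1 mod n))"
  define D where "D = one_plus_X * vec_poly n a - vec_poly n (Tmap m n a) - x_pow_minus_one n * [:c:]"
  have "int m dvd coeff D j" for j
  proof -
    have D: "coeff D j = coeff (vec_poly n a) j + (if j = 0 then 0 else coeff (vec_poly n a) (j - 1))
        - coeff (vec_poly n (Tmap m n a)) j - ((if j = n then c else 0) - (if j = 0 then c else 0))"
      unfolding D_def one_plus_X_def x_pow_minus_one_def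
      by (simp add: coeff_pCons coeff_monom algebra_simps split: nat.split)
    consider "j = 0" | "0 < j" "j < n" | "n \<le> j" by linarith
    then show ?thesis
    proof cases
      case 1
      then have "coeff D j = int (a 0 + a (1 mod n)) - int ((a 0 + a (1 mod n)) mod m)"
        using D assms(1) unfolding c_def by (simp add: coeff_vec_poly Tmap_def)
      then show ?thesis using int_dvd_diff_mod[of m "a 0 + a (1 mod n)"] by (simp only:)
    next
      case 2
      then have "n - (j - 1) = n - j + 1" "j - 1 < n" "(n - j) mod n = n - j" by auto
      then have "coeff D j = int (a (n - j) + a ((n - j + 1) mod n))
          - int ((a (n - j) + a ((n - j + 1) mod n)) mod m)"
        using D 2 by (simp add: coeff_vec_poly Tmap_def)
      then show ?thesis using int_dvd_diff_mod[of m "a (n - j) + a ((n - j + 1) mod n)"] by (simp only:)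
    next
      case 3
      then show ?thesis using D assms(1) unfolding c_def by (auto simp: coeff_vec_poly)
    qed
  qed
  then obtain D' where "D = smult (int m) D'"
    using const_poly_dvd_iff[of "int m" D] by (auto elim: dvdE)
  then have "one_plus_X * vec_poly n a - vec_poly n (Tmap m n a) = smult (int m) D' + x_pow_minus_one n * [:c:]"
    unfolding D_def by (simp add: algebra_simps)
  then show ?thesis unfolding mem_cyc_ideal_iff by blast
qed

lemma vec_poly_inj:
  assumes "0 < n" and "a \<in> vecs m n" and "b \<in> vecs m n"
    and "vec_poly n a - vec_poly n b \<in> cyc_ideal (int m) n"
  shows "a = b"
proof
  fix i
  show "a i = b i"
  proof (cases "i < n")
    case True
    define j where "j = (n - i) mod n"
    have "j < n" and "(n - j) mod n = i"
      using True assms(1) unfolding j_def by (auto simp: mod_if)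
    moreover have "int m dvd coeff (vec_poly n a - vec_poly n b) j"
      using assms(1,4) degree_vec_poly_diff by (blast intro: cyc_ideal_low_degree_coeff_dvd)
    ultimately have "[int (a i) = int (b i)] (mod int m)"
      by (simp add: coeff_vec_poly cong_iff_dvd_diff)
    then have "[a i = b i] (mod m)" by (simp only: cong_int_iff)
    moreover have "a i < m" "b i < m" using assms(2,3) True unfolding vecs_def by auto
    ultimately show ?thesis unfolding cong_def by simp
  qed (use assms(2,3) in \<open>simp add: vecs_def\<close>)
qed

lemma vec_poly_Tmap_iter:
  assumes "0 < m" and "0 < n" and "a \<in> vecs m n"
  shows "one_plus_X ^ k * vec_poly n a - vec_poly n ((Tmap m n ^^ k) a) \<in> cyc_ideal (int m) n"
proof (induction k)
  case (Suc k)
  let ?b = "(Tmap m n ^^ k) a"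
  have eq: "one_plus_X ^ Suc k * vec_poly n a - vec_poly n ((Tmap m n ^^ Suc k) a)
      = one_plus_X * (one_plus_X ^ k * vec_poly n a - vec_poly n ?b)
        + (one_plus_X * vec_poly n ?b - vec_poly n (Tmap m n ?b))"
    by (simp add: algebra_simps)
  show ?case unfolding eq
    by (rule cyc_ideal_add[OF cyc_ideal_mult_left[OF Suc]
          vec_poly_Tmap[OF assms(2) Tmap_iter_in_vecs[OF assms(1,3)]]])
qed simp

lemma Tmap_iter_eq_iff:
  assumes "0 < m" and "0 < n" and "a \<in> vecs m n"
  shows "(Tmap m n ^^ (k + P)) a = (Tmap m n ^^ k) a
    \<longleftrightarrow> one_plus_X ^ k * (one_plus_X ^ P - 1) * vec_poly n a \<in> cyc_ideal (int m) n"
proof -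
  define V where "V j = vec_poly n ((Tmap m n ^^ j) a)" for j
  have I: "one_plus_X ^ j * vec_poly n a - V j \<in> cyc_ideal (int m) n" for j
    unfolding V_def by (rule vec_poly_Tmap_iter[OF assms])
  have eq: "one_plus_X ^ k * (one_plus_X ^ P - 1) * vec_poly n a - (V (k + P) - V k)
      = (one_plus_X ^ (k + P) * vec_poly n a - V (k + P)) - (one_plus_X ^ k * vec_poly n a - V k)"
    by (simp add: algebra_simps power_add)
  have diff: "one_plus_X ^ k * (one_plus_X ^ P - 1) * vec_poly n a - (V (k + P) - V k)
      \<in> cyc_ideal (int m) n"
    unfolding eq by (rule cyc_ideal_diff[OF I I])
  show ?thesis
  proof
    assume "(Tmap m n ^^ (k + P)) a = (Tmap m n ^^ k) a"
    then show "one_plus_X ^ k * (one_plus_X ^ P - 1) * vec_poly n a \<in> cyc_ideal (int m) n"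
      using diff unfolding V_def by simp
  next
    assume "one_plus_X ^ k * (one_plus_X ^ P - 1) * vec_poly n a \<in> cyc_ideal (int m) n"
    from cyc_ideal_diff[OF this diff] have "V (k + P) - V k \<in> cyc_ideal (int m) n"
      by simp
    then show "(Tmap m n ^^ (k + P)) a = (Tmap m n ^^ k) a"
      unfolding V_def using vec_poly_inj[OF assms(2) Tmap_iter_in_vecs[OF assms(1,3)]
          Tmap_iter_in_vecs[OF assms(1,3)]] by blast
  qed
qed

lemma cycle_len_unit:
  assumes "0 < m" and "0 < n" and "a \<in> vecs m n"
    and "vec_poly n a * G - 1 \<in> cyc_ideal (int m) n"
  shows "cycle_len m n a = min_period m n"
proof -
  have "(\<exists>N. \<forall>k\<ge>N. (Tmap m n ^^ (k + P)) a = (Tmap m n ^^ k) a) \<longleftrightarrow> ev_period m n P" for P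
  proof -
    have "(Tmap m n ^^ (k + P)) a = (Tmap m n ^^ k) a
        \<longleftrightarrow> one_plus_X ^ k * (one_plus_X ^ P - 1) \<in> cyc_ideal (int m) n" for k
    proof -
      let ?f = "one_plus_X ^ k * (one_plus_X ^ P - 1)"
      have "?f = ?f * vec_poly n a * G - ?f * (vec_poly n a * G - 1)"
        by (simp add: algebra_simps)
      then have "?f * vec_poly n a \<in> cyc_ideal (int m) n \<Longrightarrow> ?f \<in> cyc_ideal (int m) n"
        using assms(4) by (metis cyc_ideal_diff cyc_ideal_mult_left cyc_ideal_mult_right)
      then show ?thesis
        using Tmap_iter_eq_iff[OF assms(1-3)] cyc_ideal_mult_right by blast
    qed
    then show ?thesis
      unfolding ev_period_def by (meson cyc_ideal_power_mult_mono order_refl)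
  qed
  then show ?thesis unfolding cycle_len_def min_period_def by simp
qed

lemma cycle_len_le:
  assumes "0 < m" and "0 < n" and "a \<in> vecs m n" and "ev_period m n P" and "0 < P"
  shows "cycle_len m n a \<le> P"
proof -
  obtain N where N: "one_plus_X ^ N * (one_plus_X ^ P - 1) \<in> cyc_ideal (int m) n"
    using assms(4) unfolding ev_period_def by blast
  have "(Tmap m n ^^ (k + P)) a = (Tmap m n ^^ k) a" if "N \<le> k" for k
    using cyc_ideal_mult_right[OF cyc_ideal_power_mult_mono[OF N that]]
    by (simp add: Tmap_iter_eq_iff[OF assms(1-3)])
  then show ?thesis unfolding cycle_len_def using assms(5) by (blast intro: Least_le)
qed

lemma vec_poly_unit_vector:
  assumes "0 < n"
  shows "vec_poly n (\<lambda>i. if i = 0 then 1 else 0) = 1"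
proof (rule poly_eqI)
  fix j
  show "coeff (vec_poly n (\<lambda>i. if i = 0 then 1 else 0)) j = coeff 1 j"
  proof (cases "0 < j \<and> j < n")
    case True
    then have "(n - j) mod n = n - j" by simp
    then show ?thesis using True by (simp add: coeff_vec_poly)
  qed (use assms in \<open>auto simp: coeff_vec_poly\<close>)
qed
lemma unit_vector_in_vecs: "1 < m \<Longrightarrow> 0 < n \<Longrightarrow> (\<lambda>i. if i = 0 then 1 else 0) \<in> vecs m n"
  unfolding vecs_def by auto

lemma Pmax_eq_min_period:
  assumes "0 < m" and "0 < n"
  shows "Pmax m n = min_period m n"
proof -
  have le: "cycle_len m n a \<le> min_period m n" if "a \<in> vecs m n" for a
    using cycle_len_le[OF assms that ev_period_min_period[OF assms] min_period_pos[OF assms]] .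
  obtain a where "a \<in> vecs m n" and "cycle_len m n a = min_period m n"
  proof (cases "m = 1")
    case True
    have zero: "(\<lambda>_. 0) \<in> vecs m n" using assms(1) by (simp add: vecs_def)
    moreover have "vec_poly n (\<lambda>_. 0) * 1 - 1 \<in> cyc_ideal (int m) n"
      unfolding True of_nat_1 by (rule cyc_ideal_one)
    ultimately have "cycle_len m n (\<lambda>_. 0) = min_period m n" by (rule cycle_len_unit[OF assms])
    then show ?thesis by (rule that[OF zero])
  next
    case False
    let ?e = "\<lambda>i. if i = 0 then 1 else 0 :: nat"
    have unit: "?e \<in> vecs m n"
      using assms False by (intro unit_vector_in_vecs) auto
    moreover have "vec_poly n ?e * 1 - 1 \<in> cyc_ideal (int m) n"
      unfolding vec_poly_unit_vector[OF assms(2)] by simp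
    ultimately have "cycle_len m n ?e = min_period m n" by (rule cycle_len_unit[OF assms])
    then show ?thesis by (rule that[OF unit])
  qed
  then have "min_period m n \<in> cycle_len m n ` vecs m n" by (metis image_eqI)
  moreover have "cycle_len m n ` vecs m n \<subseteq> {..min_period m n}" using le by blast
  then have "finite (cycle_len m n ` vecs m n)" by (rule finite_subset) simp
  ultimately show ?thesis unfolding Pmax_def using le by (intro Max_eqI) blast+
qed
theorem theorem1p6:
  fixes m n :: nat
  assumes "0 < m" and "0 < n"
    and "\<forall>p\<in>prime_factors m. odd p \<and> \<not> wieferich p"
  shows "Pmax m n = Lcm ((\<lambda>p. p ^ (multiplicity p m - 1) * Pmax p n) ` prime_factors m)"
proof -
  have prime: "prime p" and pos: "0 < multiplicity p m" if "p \<in> prime_factors m" for p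
    using that assms(1) by (auto simp: prime_factors_multiplicity)
  have "Pmax m n = min_period (\<Prod>p\<in>prime_factors m. p ^ multiplicity p m) n"
    using Pmax_eq_min_period[OF assms(1,2)] prod_prime_factors[of m] assms(1) by simp
  also have "\<dots> = Lcm ((\<lambda>p. min_period (p ^ multiplicity p m) n) ` prime_factors m)"
    using prime pairwise_coprime_prime_factor_powers assms(2)
    by (intro min_period_prod_coprime) (auto simp: prime_gt_0_nat)
  also have "\<dots> = Lcm ((\<lambda>p. p ^ (multiplicity p m - 1) * Pmax p n) ` prime_factors m)"
    using assms(2,3) prime pos
    by (intro arg_cong[where f = Lcm] image_cong)
      (simp_all add: min_period_prime_power Pmax_eq_min_period prime_gt_0_nat)
  finally show ?thesis .
qed

end
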